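(* Assume the setting of the context and put $\widehat{x}_-=\frac{C_1\epsilon}{2}$, $\widehat{x}_c=\frac{C_1\epsilon}{2}(e^{-2C_0}+1)$, $\widehat{x}_+=\frac{2e^{2C_0}}{C_1\epsilon}$. Then for all sufficiently small $\epsilon>0$ and every $\sigma\in\Sigma$ (writing $Q=Q^\epsilon_\sigma$, $D=D_{\kappa_\sigma}$): (i) if $x\in[0,\infty)$ then $Q\cdot(D\cdot x)\notin[0,\widehat{x}_-)$; (ii) if $x\in[\widehat{x}_-,\infty)$ then $Q\cdot(D\cdot x)\notin[0,\widehat{x}_c)$; (iii) if $Q\cdot(D\cdot x)\in[0,\infty)$ then $x\notin[\widehat{x}_+,\infty)$.
   Context: Let $(\Sigma,\mathbf{p})$ be a probability space. For each $\sigma\in\Sigma$ and $\epsilon\in[-1,1]$ let real numbers $a_\sigma,b_\sigma$, $\kappa_\sigma>0$ and $\alpha^\epsilon_\sigma,\beta^\epsilon_\sigma,\gamma^\epsilon_\sigma,\delta^\epsilon_\sigma$ be given, with $A^\epsilon_\sigma=\begin{pmatrix}\alpha^\epsilon_\sigma&\beta^\epsilon_\sigma\\ \gamma^\epsilon_\sigma&\delta^\epsilon_\sigma\end{pmatrix}$. Assume that for all $\sigma$: $|\log(\kappa_\sigma)|\le C_0$, $a_\sigma-|b_\sigma|\ge C_1$, $a_\sigma+|b_\sigma|\le C_2$, and $\|A^\epsilon_\sigma\|\le C_3$ for $|\epsilon|\le1$, with constants $C_0,C_1,C_2,C_3\in(0,\infty)$. On $\mathbb{R}\cup\{\infty\}$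 define $D_{\kappa}\cdot x=\kappa^2x$ and $$Q^\epsilon_\sigma\cdot x=\frac{(1+\epsilon^2\alpha^\epsilon_\sigma)x+(a_\sigma-b_\sigma-\epsilon\beta^\epsilon_\sigma)\epsilon}{1+\epsilon^2\delta^\epsilon_\sigma-(a_\sigma+b_\sigma+\epsilon\gamma^\epsilon_\sigma)\epsilon x}$$ (Möbius actions with the usual conventions at $\infty$). *)

theory Defs
  imports Complex_Main
begin

text \<open>The projective real line \<open>\<real> \<union> {\<infinity>}\<close>.\<close>
datatype ereal_proj = Fin real | Infty

fun moebius :: "real \<Rightarrow> real \<Rightarrow> real \<Rightarrow> real \<Rightarrow> ereal_proj \<Rightarrow> ereal_proj" where
  "moebius p q r s (Fin x) =
     (if r * x + s = 0 then Infty else Fin ((p * x + q) / (r * x + s)))"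
| "moebius p q r s Infty = (if r = 0 then Infty else Fin (p / r))"

definition Dact :: "real \<Rightarrow> ereal_proj \<Rightarrow> ereal_proj" where
  "Dact \<kappa> x = moebius (\<kappa>^2) 0 0 1 x"

definition Qact :: "real \<Rightarrow> real \<Rightarrow> real \<Rightarrow> real \<Rightarrow> real \<Rightarrow> real \<Rightarrow> real \<Rightarrow> ereal_proj \<Rightarrow> ereal_proj" where
  "Qact a b \<alpha> \<beta> \<gamma> \<delta> \<epsilon> x =
     moebius (1 + \<epsilon>^2 * \<alpha>) ((a - b - \<epsilon> * \<beta>) * \<epsilon>)
             (- ((a + b + \<epsilon> * \<gamma>) * \<epsilon>)) (1 + \<epsilon>^2 * \<delta>) x"

definition in_Ico :: "real \<Rightarrow> real \<Rightarrow> ereal_proj \<Rightarrow> bool" where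
  "in_Ico lo hi x = (\<exists>t. x = Fin t \<and> lo \<le> t \<and> t < hi)"

definition in_Ici :: "real \<Rightarrow> ereal_proj \<Rightarrow> bool" where
  "in_Ici lo x = (\<exists>t. x = Fin t \<and> lo \<le> t)"

definition mat2_norm :: "real \<Rightarrow> real \<Rightarrow> real \<Rightarrow> real \<Rightarrow> real" where
  "mat2_norm p q r s = sqrt (p^2 + q^2 + r^2 + s^2)"

end

theory Submission
  imports Defs
begin

text \<open>For small \<open>\<epsilon>\<close> the matrix \<open>(p q; r s)\<close> of \<open>Q\<^sup>\<epsilon>\<^sub>\<sigma>\<close> is an \<open>h\<close>-perturbation of the shear
  \<open>(1 c; -c 1)\<close>, where \<open>c = C1 \<epsilon>\<close> and \<open>h = \<epsilon>\<^sup>2 C3\<close> is at most \<open>c/8\<close> and \<open>1/4\<close>.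
  For \<open>u \<ge> 0\<close> the numerator \<open>p u + q\<close> is positive, so a nonnegative image forces a positive
  denominator \<open>r u + s\<close>; as \<open>r < 0\<close> that denominator is at most \<open>1 + h\<close>, which yields the
  lower bounds (i) and (ii). For \<open>u \<ge> 2/c\<close> the denominator is negative, so the image is
  negative, which is (iii). The map \<open>D\<close> multiplies by \<open>\<kappa>\<^sup>2 \<ge> exp (-2 C0)\<close>, which accounts for the
  factors \<open>exp (\<plusminus>2 C0)\<close>.\<close>

lemma abs_le_mat2_norm:
  "\<bar>p\<bar> \<le> mat2_norm p q r s" "\<bar>q\<bar> \<le> mat2_norm p q r s"
  "\<bar>r\<bar> \<le> mat2_norm p q r s" "\<bar>s\<bar> \<le> mat2_norm p q r s"
  unfolding mat2_norm_def by (auto intro!: real_le_rsqrt)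

locale perturbed_shear =
  fixes p q r s c h :: real
  assumes c_pos: "0 < c" and h_nonneg: "0 \<le> h"
    and h_le_c: "8 * h \<le> c" and h_le_one: "4 * h \<le> 1"
    and p_ge: "1 - h \<le> p" and q_ge: "c - h \<le> q"
    and r_le: "r \<le> h - c" and s_le: "s \<le> 1 + h"
begin

lemma r_neg: "r < 0"
  using r_le h_le_c c_pos by linarith

lemma p_pos: "0 < p"
  using p_ge h_le_one by linarith

lemma moebius_Infty_neg: "moebius p q r s Infty = Fin (p / r)" "p / r < 0"
  using r_neg p_pos by (auto simp: divide_pos_neg)

lemma moebius_Fin_nonneg_lower_bound:
  assumes "0 \<le> E" "E \<le> 1" "E * c / 2 \<le> u"
    and image: "moebius p q r s (Fin u) = Fin y" "0 \<le> y"
  shows "c / 2 * (E + 1) \<le> y"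
proof -
  have "0 \<le> E * c / 2"
    using assms(1) c_pos by simp
  then have u_nonneg: "0 \<le> u"
    using assms(3) by linarith
  have den_ne: "r * u + s \<noteq> 0" and y_eq: "y = (p * u + q) / (r * u + s)"
    using image(1) by (auto split: if_splits)
  have "(1 - h) * (E * c / 2) \<le> p * u"
    using p_ge h_le_one u_nonneg assms(3) \<open>0 \<le> E * c / 2\<close> by (intro mult_mono) auto
  moreover have "h * E * c \<le> h * c"
    using mult_right_mono[OF mult_left_le[OF assms(2) h_nonneg]] c_pos by simp
  moreover have "h * c \<le> c / 4"
    using h_le_one c_pos by simp
  ultimately have num: "c / 2 * (E + 1) * (1 + h) \<le> p * u + q"
    using q_ge h_le_c by (simp add: algebra_simps)
  have "0 < c / 2 * (E + 1) * (1 + h)"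
    using c_pos assms(1) h_nonneg by simp
  then have "0 < p * u + q"
    using num by linarith
  then have den_pos: "0 < r * u + s"
    using image(2) den_ne by (simp add: y_eq zero_le_divide_iff)
  have "r * u \<le> 0"
    using r_neg u_nonneg by (simp add: mult_nonpos_nonneg)
  then have "c / 2 * (E + 1) * (r * u + s) \<le> c / 2 * (E + 1) * (1 + h)"
    using s_le c_pos assms(1) by (intro mult_left_mono) auto
  then have "c / 2 * (E + 1) * (r * u + s) \<le> p * u + q"
    using num by linarith
  then show ?thesis
    by (simp add: y_eq pos_le_divide_eq den_pos)
qed

lemma moebius_Fin_large_neg:
  assumes "2 / c \<le> u" and image: "moebius p q r s (Fin u) = Fin y"
  shows "y < 0"
proof -
  have den_ne: "r * u + s \<noteq> 0" and y_eq: "y = (p * u + q) / (r * u + s)"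
    using image by (auto split: if_splits)
  have u_pos: "0 < u"
    using assms(1) c_pos by (smt (verit) divide_pos_pos)
  have "r * u \<le> - (7 / 8 * c) * u"
    using r_le h_le_c u_pos by (intro mult_right_mono) auto
  also have "\<dots> \<le> - (7 / 8 * c) * (2 / c)"
    using assms(1) c_pos by (intro mult_left_mono_neg) auto
  also have "\<dots> = - 7 / 4"
    using c_pos by simp
  finally have "r * u + s < 0"
    using s_le h_le_one by linarith
  moreover have "0 < p * u + q"
    using p_pos u_pos q_ge h_le_c c_pos by (smt (verit) mult_pos_pos)
  ultimately show ?thesis
    by (simp add: y_eq divide_pos_neg)
qed

lemma trapping_regions:
  assumes "0 < E" "E \<le> 1" "E \<le> k\<^sup>2"
  shows "(in_Ici 0 x \<longrightarrow> \<not> in_Ico 0 (c / 2) (moebius p q r s (Dact k x)))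
    \<and> (in_Ici (c / 2) x \<longrightarrow> \<not> in_Ico 0 (c / 2 * (E + 1)) (moebius p q r s (Dact k x)))
    \<and> (in_Ici 0 (moebius p q r s (Dact k x)) \<longrightarrow> \<not> in_Ici (2 / (c * E)) x)"
proof (cases x)
  case Infty
  then show ?thesis
    using moebius_Infty_neg by (auto simp: Dact_def in_Ici_def)
next
  case (Fin t)
  have D: "Dact k (Fin t) = Fin (k\<^sup>2 * t)"
    by (simp add: Dact_def)
  have no_small_image: "\<not> in_Ico 0 (c / 2 * (E' + 1)) (moebius p q r s (Dact k x))"
    if "0 \<le> E'" "E' \<le> 1" "E' * c / 2 \<le> k\<^sup>2 * t" for E'
    using moebius_Fin_nonneg_lower_bound[OF that] by (force simp: Fin D in_Ico_def)
  have no_nonneg_image: "\<not> in_Ici 0 (moebius p q r s (Dact k x))" if "2 / c \<le> k\<^sup>2 * t"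
    using moebius_Fin_large_neg[OF that] by (force simp: Fin D in_Ici_def)
  show ?thesis
  proof (intro conjI impI)
    assume "in_Ici 0 x"
    then have "0 * c / 2 \<le> k\<^sup>2 * t"
      by (simp add: Fin in_Ici_def)
    then show "\<not> in_Ico 0 (c / 2) (moebius p q r s (Dact k x))"
      using no_small_image[of 0] by simp
  next
    assume "in_Ici (c / 2) x"
    then have "E * (c / 2) \<le> k\<^sup>2 * t"
      using assms c_pos by (intro mult_mono) (auto simp: Fin in_Ici_def)
    then show "\<not> in_Ico 0 (c / 2 * (E + 1)) (moebius p q r s (Dact k x))"
      using no_small_image[of E] assms by simp
  next
    assume "in_Ici 0 (moebius p q r s (Dact k x))"
    show "\<not> in_Ici (2 / (c * E)) x"
    proof
      assume "in_Ici (2 / (c * E)) x"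
      then have "E * (2 / (c * E)) \<le> k\<^sup>2 * t"
        using assms c_pos by (intro mult_mono) (auto simp: Fin in_Ici_def)
      then have "2 / c \<le> k\<^sup>2 * t"
        using assms(1) by simp
      then show False
        using no_nonneg_image \<open>in_Ici 0 (moebius p q r s (Dact k x))\<close> by blast
    qed
  qed
qed

end

lemma perturbed_shear_Qact_coeffs:
  fixes a b A B G D C1 C3 e :: real
  assumes e: "0 < e" "e \<le> 1" and "0 < C1" "C1 \<le> a - \<bar>b\<bar>"
    and small: "8 * e * C3 \<le> C1" "4 * e * C3 \<le> 1"
    and norm: "mat2_norm A B G D \<le> C3"
  shows "perturbed_shear (1 + e\<^sup>2 * A) ((a - b - e * B) * e) (- ((a + b + e * G) * e))
    (1 + e\<^sup>2 * D) (C1 * e) (e\<^sup>2 * C3)"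
proof -
  have entries: "\<bar>A\<bar> \<le> C3" "\<bar>B\<bar> \<le> C3" "\<bar>G\<bar> \<le> C3" "\<bar>D\<bar> \<le> C3"
    by (meson abs_le_mat2_norm norm order_trans)+
  then have "0 \<le> C3"
    by linarith
  have "- C3 \<le> A" "B \<le> C3" "- C3 \<le> G" "D \<le> C3"
    using entries by auto
  then have eA: "e * (- C3) \<le> e * A" and eB: "e * B \<le> e * C3"
    and eG: "e * (- C3) \<le> e * G" and eD: "e * D \<le> e * C3"
    using e by (auto intro: mult_left_mono simp del: mult_minus_right)
  have "C1 \<le> a - b" "C1 \<le> a + b"
    using assms(4) by arith+
  then have "C1 - e * C3 \<le> a - b - e * B" "C1 - e * C3 \<le> a + b + e * G"
    using eB eG by linarith+
  then have "(C1 - e * C3) * e \<le> (a - b - e * B) * e" "(C1 - e * C3) * e \<le> (a + b + e * G) * e"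
    using e by (auto intro: mult_right_mono)
  moreover have "e * (e * (- C3)) \<le> e * (e * A)" "e * (e * D) \<le> e * (e * C3)"
    using eA eD e by (auto intro: mult_left_mono simp del: mult_minus_right)
  moreover have "e * (8 * e * C3) \<le> e * C1"
    using small e by (intro mult_left_mono) auto
  moreover have "e * (4 * e * C3) \<le> 1"
    using mult_le_one[of e "4 * e * C3"] small e \<open>0 \<le> C3\<close> by simp
  ultimately show ?thesis
    using e \<open>0 < C1\<close> \<open>0 \<le> C3\<close>
    by unfold_locales (simp_all add: power2_eq_square algebra_simps)
qed

lemma exp_neg_le_square:
  fixes k C :: real
  assumes "0 < k" "\<bar>ln k\<bar> \<le> C"
  shows "exp (-2 * C) \<le> k\<^sup>2"
proof -
  have "k\<^sup>2 = exp (2 * ln k)"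
    using assms(1) by (simp add: exp_double)
  then show ?thesis
    using assms(2) by simp
qed

theorem lemma2:
  fixes Sig :: "'s set"
    and a b \<kappa> :: "'s \<Rightarrow> real"
    and \<alpha> \<beta> \<gamma> \<delta> :: "'s \<Rightarrow> real \<Rightarrow> real"
    and C0 C1 C2 C3 :: real
  assumes "C0 > 0" "C1 > 0" "C2 > 0" "C3 > 0"
    and "\<forall>\<sigma>\<in>Sig. \<kappa> \<sigma> > 0"
    and "\<forall>\<sigma>\<in>Sig. \<bar>ln (\<kappa> \<sigma>)\<bar> \<le> C0"
    and "\<forall>\<sigma>\<in>Sig. a \<sigma> - \<bar>b \<sigma>\<bar> \<ge> C1"
    and "\<forall>\<sigma>\<in>Sig. a \<sigma> + \<bar>b \<sigma>\<bar> \<le> C2"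
    and "\<forall>\<sigma>\<in>Sig. \<forall>\<epsilon>. \<bar>\<epsilon>\<bar> \<le> 1 \<longrightarrow>
           mat2_norm (\<alpha> \<sigma> \<epsilon>) (\<beta> \<sigma> \<epsilon>) (\<gamma> \<sigma> \<epsilon>) (\<delta> \<sigma> \<epsilon>) \<le> C3"
  shows "\<exists>\<epsilon>0>0. \<forall>\<epsilon>. 0 < \<epsilon> \<and> \<epsilon> < \<epsilon>0 \<longrightarrow> (\<forall>\<sigma>\<in>Sig. \<forall>x.
     (let Q = Qact (a \<sigma>) (b \<sigma>) (\<alpha> \<sigma> \<epsilon>) (\<beta> \<sigma> \<epsilon>) (\<gamma> \<sigma> \<epsilon>) (\<delta> \<sigma> \<epsilon>) \<epsilon>;
          D = Dact (\<kappa> \<sigma>);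
          xm = C1 * \<epsilon> / 2;
          xc = C1 * \<epsilon> / 2 * (exp (- 2 * C0) + 1);
          xp = 2 * exp (2 * C0) / (C1 * \<epsilon>)
      in (in_Ici 0 x \<longrightarrow> \<not> in_Ico 0 xm (Q (D x)))
       \<and> (in_Ici xm x \<longrightarrow> \<not> in_Ico 0 xc (Q (D x)))
       \<and> (in_Ici 0 (Q (D x)) \<longrightarrow> \<not> in_Ici xp x)))"
proof -
  define \<epsilon>0 where "\<epsilon>0 = min 1 (min (C1 / (8 * C3)) (1 / (4 * C3)))"
  have "0 < \<epsilon>0"
    unfolding \<epsilon>0_def using assms(2,4) by simp
  show ?thesis
    apply (intro exI[of _ \<epsilon>0] conjI allI impI ballI \<open>0 < \<epsilon>0\<close>)
    subgoal premises small for \<epsilon> \<sigma> x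
    proof -
      have "0 < \<epsilon>" "\<epsilon> \<le> 1" "8 * \<epsilon> * C3 \<le> C1" "4 * \<epsilon> * C3 \<le> 1"
        using small(1) assms(4) by (auto simp: \<epsilon>0_def field_simps)
      then interpret perturbed_shear "1 + \<epsilon>\<^sup>2 * \<alpha> \<sigma> \<epsilon>" "(a \<sigma> - b \<sigma> - \<epsilon> * \<beta> \<sigma> \<epsilon>) * \<epsilon>"
          "- ((a \<sigma> + b \<sigma> + \<epsilon> * \<gamma> \<sigma> \<epsilon>) * \<epsilon>)" "1 + \<epsilon>\<^sup>2 * \<delta> \<sigma> \<epsilon>" "C1 * \<epsilon>" "\<epsilon>\<^sup>2 * C3"
        using small(2) assms by (intro perturbed_shear_Qact_coeffs) auto
      have "exp (-2 * C0) \<le> (\<kappa> \<sigma>)\<^sup>2"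
        using small(2) assms by (intro exp_neg_le_square) auto
      moreover have "2 * exp (2 * C0) / (C1 * \<epsilon>) = 2 / (C1 * \<epsilon> * exp (-2 * C0))"
        by (simp add: exp_minus field_simps)
      ultimately show ?thesis
        using trapping_regions[of "exp (-2 * C0)" "\<kappa> \<sigma>" x] assms(1) by (simp add: Qact_def Let_def)
    qed
    done
qed

end
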